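(* Let $m(n)$ denote the number of unlabeled modular lattices with $n$ elements. Then $m(n) \ge \Omega(2.1332^n)$, i.e., there is a constant $b>0$ such that $m(n) \ge b \cdot 2.1332^n$ for all sufficiently large $n$.
   Context: All lattices are finite and nonempty, counted up to isomorphism. *)

theory Defs
  imports Complex_Main
begin

definition is_lub :: "'a set \<Rightarrow> 'a rel \<Rightarrow> 'a \<Rightarrow> 'a \<Rightarrow> 'a \<Rightarrow> bool" where
  "is_lub A r x y z \<longleftrightarrow> z \<in> A \<and> (x, z) \<in> r \<and> (y, z) \<in> r \<and>
     (\<forall>w\<in>A. (x, w) \<in> r \<and> (y, w) \<in> r \<longrightarrow> (z, w) \<in> r)"

definition is_glb :: "'a set \<Rightarrow> 'a rel \<Rightarrow> 'a \<Rightarrow> 'a \<Rightarrow> 'a \<Rightarrow> bool" where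
  "is_glb A r x y z \<longleftrightarrow> z \<in> A \<and> (z, x) \<in> r \<and> (z, y) \<in> r \<and>
     (\<forall>w\<in>A. (w, x) \<in> r \<and> (w, y) \<in> r \<longrightarrow> (w, z) \<in> r)"

definition ljoin :: "'a set \<Rightarrow> 'a rel \<Rightarrow> 'a \<Rightarrow> 'a \<Rightarrow> 'a" where
  "ljoin A r x y = (THE z. is_lub A r x y z)"

definition lmeet :: "'a set \<Rightarrow> 'a rel \<Rightarrow> 'a \<Rightarrow> 'a \<Rightarrow> 'a" where
  "lmeet A r x y = (THE z. is_glb A r x y z)"

definition lattice_on :: "'a set \<Rightarrow> 'a rel \<Rightarrow> bool" where
  "lattice_on A r \<longleftrightarrow> A \<noteq> {} \<and> r \<subseteq> A \<times> A \<and> partial_order_on A r \<and>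
     (\<forall>x\<in>A. \<forall>y\<in>A. (\<exists>z. is_lub A r x y z) \<and> (\<exists>z. is_glb A r x y z))"

definition modular_lattice_on :: "'a set \<Rightarrow> 'a rel \<Rightarrow> bool" where
  "modular_lattice_on A r \<longleftrightarrow> lattice_on A r \<and>
     (\<forall>x\<in>A. \<forall>y\<in>A. \<forall>z\<in>A. (x, z) \<in> r \<longrightarrow>
        ljoin A r x (lmeet A r y z) = lmeet A r (ljoin A r x y) z)"

definition order_iso_on :: "'a set \<Rightarrow> 'a rel \<Rightarrow> 'a rel \<Rightarrow> bool" where
  "order_iso_on A r s \<longleftrightarrow> (\<exists>f. bij_betw f A A \<and>
     (\<forall>x\<in>A. \<forall>y\<in>A. (x, y) \<in> r \<longleftrightarrow> (f x, f y) \<in> s))"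

definition num_modular_lattices :: "nat \<Rightarrow> nat" where
  "num_modular_lattices n =
     card ({r. modular_lattice_on {0..<n} r} //
           {(r, s). modular_lattice_on {0..<n} r \<and> modular_lattice_on {0..<n} s
                    \<and> order_iso_on {0..<n} r s})"

end

theory Submission
  imports Defs "HOL-Library.Sublist"
begin

text \<open>A lattice with a strictly monotone valuation, \<open>h x + h y = h (x \<squnion> y) + h (x \<sqinter> y)\<close>, is
  modular. Such lattices are built inside \<open>\<nat>\<^sup>2\<close>: a strip of the grid of width at most two between
  two monotone lattice paths, in which every square straddling a level of width two may receive up
  to five extra atoms. A strip lattice is described level by level by a word (its code) over a
  small alphabet of steps, and it has one element more than the weight of its code. Codes of equal
  weight give non-isomorphic lattices, because a code can be read back from order invariants: the
  number of elements of each rank, and whether some element of a given rank has two neighbours on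
  each adjacent rank, which happens exactly where the strip turns. Counting codes leads to a linear
  recurrence with three states, and a positive super-solution of growth rate 2.1332 gives the
  bound.\<close>

section \<open>Modularity from a valuation\<close>

definition rel_of :: "'a set \<Rightarrow> ('a \<Rightarrow> 'a \<Rightarrow> bool) \<Rightarrow> 'a rel" where
  "rel_of A le = {(x, y). x \<in> A \<and> y \<in> A \<and> le x y}"

locale valuated_lattice =
  fixes A :: "'a set" and le :: "'a \<Rightarrow> 'a \<Rightarrow> bool"
    and join meet :: "'a \<Rightarrow> 'a \<Rightarrow> 'a" and h :: "'a \<Rightarrow> nat"
  assumes nonempty: "A \<noteq> {}"
    and ord_refl: "x \<in> A \<Longrightarrow> le x x"
    and ord_antisym: "x \<in> A \<Longrightarrow> y \<in> A \<Longrightarrow> le x y \<Longrightarrow> le y x \<Longrightarrow> x = y"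
    and ord_trans: "x \<in> A \<Longrightarrow> y \<in> A \<Longrightarrow> z \<in> A \<Longrightarrow> le x y \<Longrightarrow> le y z \<Longrightarrow> le x z"
    and join_closed: "x \<in> A \<Longrightarrow> y \<in> A \<Longrightarrow> join x y \<in> A"
    and join_upper1: "x \<in> A \<Longrightarrow> y \<in> A \<Longrightarrow> le x (join x y)"
    and join_upper2: "x \<in> A \<Longrightarrow> y \<in> A \<Longrightarrow> le y (join x y)"
    and join_least: "x \<in> A \<Longrightarrow> y \<in> A \<Longrightarrow> z \<in> A \<Longrightarrow> le x z \<Longrightarrow> le y z \<Longrightarrow> le (join x y) z"
    and meet_closed: "x \<in> A \<Longrightarrow> y \<in> A \<Longrightarrow> meet x y \<in> A"
    and meet_lower1: "x \<in> A \<Longrightarrow> y \<in> A \<Longrightarrow> le (meet x y) x"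
    and meet_lower2: "x \<in> A \<Longrightarrow> y \<in> A \<Longrightarrow> le (meet x y) y"
    and meet_greatest: "x \<in> A \<Longrightarrow> y \<in> A \<Longrightarrow> z \<in> A \<Longrightarrow> le z x \<Longrightarrow> le z y \<Longrightarrow> le z (meet x y)"
    and height_strict_mono: "x \<in> A \<Longrightarrow> y \<in> A \<Longrightarrow> le x y \<Longrightarrow> x \<noteq> y \<Longrightarrow> h x < h y"
    and height_valuation: "x \<in> A \<Longrightarrow> y \<in> A \<Longrightarrow> h x + h y = h (join x y) + h (meet x y)"
begin

lemma is_lub_join: "x \<in> A \<Longrightarrow> y \<in> A \<Longrightarrow> is_lub A (rel_of A le) x y (join x y)"
  unfolding is_lub_def rel_of_def using join_closed join_upper1 join_upper2 join_least by auto

lemma is_glb_meet: "x \<in> A \<Longrightarrow> y \<in> A \<Longrightarrow> is_glb A (rel_of A le) x y (meet x y)"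
  unfolding is_glb_def rel_of_def using meet_closed meet_lower1 meet_lower2 meet_greatest by auto

lemma ljoin_eq: "x \<in> A \<Longrightarrow> y \<in> A \<Longrightarrow> ljoin A (rel_of A le) x y = join x y"
  unfolding ljoin_def
  by (rule the_equality, erule (1) is_lub_join)
    (auto simp: is_lub_def rel_of_def intro: ord_antisym join_closed join_least join_upper1 join_upper2)

lemma lmeet_eq: "x \<in> A \<Longrightarrow> y \<in> A \<Longrightarrow> lmeet A (rel_of A le) x y = meet x y"
  unfolding lmeet_def
  by (rule the_equality, erule (1) is_glb_meet)
    (auto simp: is_glb_def rel_of_def intro: ord_antisym meet_closed meet_greatest meet_lower1 meet_lower2)

text \<open>The inequality \<open>x \<squnion> (y \<sqinter> z) \<le> (x \<squnion> y) \<sqinter> z\<close> holds in every lattice; it is an equality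
  because the valuation gives both sides the same height.\<close>

lemma modular_law:
  assumes x: "x \<in> A" and y: "y \<in> A" and z: "z \<in> A" and xz: "le x z"
  shows "join x (meet y z) = meet (join x y) z"
proof -
  define a where "a = join x (meet y z)"
  define b where "b = meet (join x y) z"
  have yz: "meet y z \<in> A" "join y z \<in> A" and xy: "join x y \<in> A" "meet x y \<in> A"
    using x y z join_closed meet_closed by auto
  have ab: "a \<in> A" "b \<in> A" unfolding a_def b_def using x z yz xy join_closed meet_closed by auto
  have "le (meet y z) (join x y)"
    using ord_trans[OF yz(1) y xy(1)] meet_lower1[OF y z] join_upper2[OF x y] by simp
  then have "le (meet y z) b"
    unfolding b_def using meet_greatest[OF xy(1) z yz(1)] meet_lower2[OF y z] by blast
  moreover have "le x b" unfolding b_def by (rule meet_greatest[OF xy(1) z x join_upper1[OF x y] xz])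
  ultimately have "le a b" unfolding a_def using join_least[OF x yz(1) ab(2)] by simp
  have xyz: "meet x (meet y z) \<in> A" "join (join x y) z \<in> A"
    using x z yz xy join_closed meet_closed by auto
  have meet_eq: "meet x (meet y z) = meet x y"
  proof (rule ord_antisym[OF xyz(1) xy(2)])
    show "le (meet x (meet y z)) (meet x y)"
      by (rule meet_greatest[OF x y xyz(1) meet_lower1[OF x yz(1)]
            ord_trans[OF xyz(1) yz(1) y meet_lower2[OF x yz(1)] meet_lower1[OF y z]]])
    show "le (meet x y) (meet x (meet y z))"
      by (rule meet_greatest[OF x yz(1) xy(2) meet_lower1[OF x y]
            meet_greatest[OF y z xy(2) meet_lower2[OF x y] ord_trans[OF xy(2) x z meet_lower1[OF x y] xz]]])
  qed
  have join_eq: "join (join x y) z = join y z"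
  proof (rule ord_antisym[OF xyz(2) yz(2)])
    show "le (join (join x y) z) (join y z)"
      by (rule join_least[OF xy(1) z yz(2) join_least[OF x y yz(2)
            ord_trans[OF x z yz(2) xz join_upper2[OF y z]] join_upper1[OF y z]] join_upper2[OF y z]])
    show "le (join y z) (join (join x y) z)"
      by (rule join_least[OF y z xyz(2) ord_trans[OF y xy(1) xyz(2) join_upper2[OF x y] join_upper1[OF xy(1) z]]
            join_upper2[OF xy(1) z]])
  qed
  have "h a = h b"
    using height_valuation[OF x yz(1)] height_valuation[OF xy(1) z] height_valuation[OF x y]
      height_valuation[OF y z] unfolding a_def b_def meet_eq join_eq by linarith
  then have "a = b" using height_strict_mono[OF ab \<open>le a b\<close>] by (cases "a = b") auto
  then show ?thesis unfolding a_def b_def .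
qed

theorem modular_lattice_on: "modular_lattice_on A (rel_of A le)"
  unfolding modular_lattice_on_def lattice_on_def partial_order_on_def preorder_on_def
proof (intro conjI ballI impI)
  show "refl_on A (rel_of A le)" "trans (rel_of A le)" "antisym (rel_of A le)"
    unfolding refl_on_def trans_def antisym_def rel_of_def
    using ord_refl ord_trans ord_antisym by blast+
  fix x y z assume "x \<in> A" "y \<in> A" "z \<in> A"
  then show "\<exists>u. is_lub A (rel_of A le) x y u" "\<exists>u. is_glb A (rel_of A le) x y u"
    using is_lub_join is_glb_meet by blast+
  assume "(x, z) \<in> rel_of A le"
  then have "le x z" by (simp add: rel_of_def)
  then show "ljoin A (rel_of A le) x (lmeet A (rel_of A le) y z) =
      lmeet A (rel_of A le) (ljoin A (rel_of A le) x y) z"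
    using \<open>x \<in> A\<close> \<open>y \<in> A\<close> \<open>z \<in> A\<close>
    by (simp add: ljoin_eq lmeet_eq modular_law meet_closed join_closed)
qed (use nonempty in \<open>auto simp: rel_of_def\<close>)

end

lemma valuated_lattice_transfer:
  assumes "valuated_lattice A le join meet h" and g: "bij_betw g A B"
  defines "g' \<equiv> inv_into A g"
  shows "valuated_lattice B (\<lambda>i j. le (g' i) (g' j)) (\<lambda>i j. g (join (g' i) (g' j)))
           (\<lambda>i j. g (meet (g' i) (g' j))) (\<lambda>i. h (g' i))"
proof -
  interpret valuated_lattice A le join meet h by fact
  have g'_in: "\<And>i. i \<in> B \<Longrightarrow> g' i \<in> A" and g_in: "\<And>x. x \<in> A \<Longrightarrow> g x \<in> B"
    using bij_betwE[OF bij_betw_inv_into[OF g]] bij_betwE[OF g] unfolding g'_def by blast+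
  have g'_g [simp]: "\<And>x. x \<in> A \<Longrightarrow> g' (g x) = x"
    unfolding g'_def using g by (rule bij_betw_inv_into_left)
  have g_g' [simp]: "\<And>i. i \<in> B \<Longrightarrow> g (g' i) = i"
    unfolding g'_def using g by (rule bij_betw_inv_into_right)
  have g'_inj: "\<And>i j. i \<in> B \<Longrightarrow> j \<in> B \<Longrightarrow> g' i = g' j \<Longrightarrow> i = j"
    using g_g' by metis
  show ?thesis
  proof unfold_locales
    show "B \<noteq> {}" using nonempty bij_betw_imp_surj_on[OF g] by auto
  next
    fix i assume "i \<in> B"
    then show "le (g' i) (g' i)" by (simp add: g'_in ord_refl)
  next
    fix i j assume "i \<in> B" "j \<in> B" "le (g' i) (g' j)" "le (g' j) (g' i)"
    then show "i = j" using g'_inj ord_antisym[OF g'_in g'_in] by metis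
  next
    fix i j k assume "i \<in> B" "j \<in> B" "k \<in> B" "le (g' i) (g' j)" "le (g' j) (g' k)"
    then show "le (g' i) (g' k)" using ord_trans[OF g'_in g'_in g'_in] by metis
  next
    fix i j assume "i \<in> B" "j \<in> B"
    then show "g (join (g' i) (g' j)) \<in> B" "le (g' i) (g' (g (join (g' i) (g' j))))"
      "le (g' j) (g' (g (join (g' i) (g' j))))"
      by (simp_all add: g'_in g_in join_closed join_upper1 join_upper2)
  next
    fix i j k assume "i \<in> B" "j \<in> B" "k \<in> B" "le (g' i) (g' k)" "le (g' j) (g' k)"
    then show "le (g' (g (join (g' i) (g' j)))) (g' k)" by (simp add: g'_in join_closed join_least)
  next
    fix i j assume "i \<in> B" "j \<in> B"
    then show "g (meet (g' i) (g' j)) \<in> B" "le (g' (g (meet (g' i) (g' j)))) (g' i)"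
      "le (g' (g (meet (g' i) (g' j)))) (g' j)"
      by (simp_all add: g'_in g_in meet_closed meet_lower1 meet_lower2)
  next
    fix i j k assume "i \<in> B" "j \<in> B" "k \<in> B" "le (g' k) (g' i)" "le (g' k) (g' j)"
    then show "le (g' k) (g' (g (meet (g' i) (g' j))))" by (simp add: g'_in meet_closed meet_greatest)
  next
    fix i j assume "i \<in> B" "j \<in> B" "le (g' i) (g' j)" "i \<noteq> j"
    then show "h (g' i) < h (g' j)" using g'_inj height_strict_mono[OF g'_in g'_in] by metis
  next
    fix i j assume "i \<in> B" "j \<in> B"
    then show "h (g' i) + h (g' j) = h (g' (g (join (g' i) (g' j)))) + h (g' (g (meet (g' i) (g' j))))"
      using height_valuation[OF g'_in g'_in] by (simp add: g'_in join_closed meet_closed)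
  qed
qed

section \<open>Order invariants of ranked posets\<close>

definition ranked_on :: "'a set \<Rightarrow> ('a \<Rightarrow> 'a \<Rightarrow> bool) \<Rightarrow> ('a \<Rightarrow> nat) \<Rightarrow> bool" where
  "ranked_on A le h \<longleftrightarrow>
     (\<forall>x\<in>A. \<forall>y\<in>A. le x y \<and> x \<noteq> y \<longrightarrow> h x < h y) \<and>
     (\<forall>u\<in>A. 0 < h u \<longrightarrow> (\<exists>v\<in>A. le v u \<and> v \<noteq> u \<and> Suc (h v) = h u))"

definition level_size :: "'a set \<Rightarrow> ('a \<Rightarrow> nat) \<Rightarrow> nat \<Rightarrow> nat" where
  "level_size A h k = card {u \<in> A. h u = k}"

definition cross_at :: "'a set \<Rightarrow> ('a \<Rightarrow> 'a \<Rightarrow> bool) \<Rightarrow> ('a \<Rightarrow> nat) \<Rightarrow> nat \<Rightarrow> bool" where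
  "cross_at A le h k \<longleftrightarrow> (\<exists>u\<in>A. h u = k \<and>
     (\<exists>v1\<in>A. \<exists>v2\<in>A. v1 \<noteq> v2 \<and> le v1 u \<and> le v2 u \<and> Suc (h v1) = k \<and> Suc (h v2) = k) \<and>
     (\<exists>z1\<in>A. \<exists>z2\<in>A. z1 \<noteq> z2 \<and> le u z1 \<and> le u z2 \<and> h z1 = Suc k \<and> h z2 = Suc k))"

lemma rank_le_rank_of_embedding:
  assumes "ranked_on A le h" "ranked_on B le' h'"
    and inj: "inj_on \<phi> A" and maps: "\<phi> ` A \<subseteq> B"
    and mono: "\<And>u v. u \<in> A \<Longrightarrow> v \<in> A \<Longrightarrow> le u v \<Longrightarrow> le' (\<phi> u) (\<phi> v)"
  shows "u \<in> A \<Longrightarrow> h u \<le> h' (\<phi> u)"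
proof (induction "h u" arbitrary: u rule: less_induct)
  case less
  show ?case
  proof (cases "h u = 0")
    case False
    then obtain v where v: "v \<in> A" "le v u" "v \<noteq> u" "Suc (h v) = h u"
      using assms(1) less.prems unfolding ranked_on_def by auto
    have "h v \<le> h' (\<phi> v)" using less.hyps[of v] v by simp
    moreover have "h' (\<phi> v) < h' (\<phi> u)"
      using assms(2) mono[OF v(1) less.prems v(2)] inj_onD[OF inj _ v(1) less.prems] v(3)
        maps v(1) less.prems unfolding ranked_on_def by blast
    ultimately show ?thesis using v(4) by linarith
  qed simp
qed

lemma rank_preserved_by_order_iso:
  assumes "ranked_on A le h" "ranked_on B le' h'" and bij: "bij_betw \<phi> A B"
    and iso: "\<And>u v. u \<in> A \<Longrightarrow> v \<in> A \<Longrightarrow> le' (\<phi> u) (\<phi> v) \<longleftrightarrow> le u v"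
    and u: "u \<in> A"
  shows "h' (\<phi> u) = h u"
proof -
  let ?\<psi> = "inv_into A \<phi>"
  have \<psi>: "bij_betw ?\<psi> B A" by (rule bij_betw_inv_into[OF bij])
  have \<phi>\<psi>: "\<And>x. x \<in> B \<Longrightarrow> \<phi> (?\<psi> x) = x" by (rule bij_betw_inv_into_right[OF bij])
  have "h u \<le> h' (\<phi> u)"
    using rank_le_rank_of_embedding[OF assms(1,2) bij_betw_imp_inj_on[OF bij]] bij iso u
    by (simp add: bij_betw_def)
  moreover have "h' (\<phi> u) \<le> h (?\<psi> (\<phi> u))"
  proof (rule rank_le_rank_of_embedding[OF assms(2,1) bij_betw_imp_inj_on[OF \<psi>]])
    show "?\<psi> ` B \<subseteq> A" using \<psi> by (simp add: bij_betw_def)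
    show "le (?\<psi> x) (?\<psi> y)" if "x \<in> B" "y \<in> B" "le' x y" for x y
      using iso[of "?\<psi> x" "?\<psi> y"] that \<phi>\<psi> bij_betwE[OF \<psi>] by auto
    show "\<phi> u \<in> B" using bij u by (simp add: bij_betwE)
  qed
  ultimately show ?thesis using bij_betw_inv_into_left[OF bij u] by simp
qed

lemma level_size_bij:
  assumes "bij_betw \<phi> A B" and "\<And>u. u \<in> A \<Longrightarrow> h' (\<phi> u) = h u"
  shows "level_size B h' k = level_size A h k"
proof -
  have "bij_betw \<phi> {u \<in> A. h u = k} {x \<in> B. h' x = k}"
    using assms unfolding bij_betw_def inj_on_def by force
  then show ?thesis unfolding level_size_def by (simp add: bij_betw_same_card)
qed

lemma cross_at_image:
  assumes "cross_at A le h k" and inj: "inj_on \<phi> A" and maps: "\<phi> ` A \<subseteq> B"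
    and mono: "\<And>u v. u \<in> A \<Longrightarrow> v \<in> A \<Longrightarrow> le u v \<Longrightarrow> le' (\<phi> u) (\<phi> v)"
    and rank: "\<And>u. u \<in> A \<Longrightarrow> h' (\<phi> u) = h u"
  shows "cross_at B le' h' k"
proof -
  obtain u v1 v2 z1 z2 where u: "u \<in> A" "h u = k"
    and v: "v1 \<in> A" "v2 \<in> A" "v1 \<noteq> v2" "le v1 u" "le v2 u" "Suc (h v1) = k" "Suc (h v2) = k"
    and z: "z1 \<in> A" "z2 \<in> A" "z1 \<noteq> z2" "le u z1" "le u z2" "h z1 = Suc k" "h z2 = Suc k"
    using assms(1) unfolding cross_at_def by blast
  have "\<phi> v1 \<noteq> \<phi> v2" "\<phi> z1 \<noteq> \<phi> z2" using inj_onD[OF inj] u v z by blast+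
  moreover have "\<phi> u \<in> B" "\<phi> v1 \<in> B" "\<phi> v2 \<in> B" "\<phi> z1 \<in> B" "\<phi> z2 \<in> B"
    using maps u v z by auto
  moreover have "le' (\<phi> v1) (\<phi> u)" "le' (\<phi> v2) (\<phi> u)" "le' (\<phi> u) (\<phi> z1)" "le' (\<phi> u) (\<phi> z2)"
    using mono u v z by auto
  moreover have "h' (\<phi> u) = k" "Suc (h' (\<phi> v1)) = k" "Suc (h' (\<phi> v2)) = k"
    "h' (\<phi> z1) = Suc k" "h' (\<phi> z2) = Suc k"
    using rank u v z by auto
  ultimately show ?thesis unfolding cross_at_def by blast
qed

lemma not_cross_atI:
  assumes "\<And>u. u \<in> A \<Longrightarrow> h u = Suc j \<Longrightarrow>
      (\<exists>w. {v \<in> A. h v = j \<and> le v u} \<subseteq> {w}) \<or> (\<exists>w. {z \<in> A. h z = Suc (Suc j) \<and> le u z} \<subseteq> {w})"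
  shows "\<not> cross_at A le h (Suc j)"
proof
  assume "cross_at A le h (Suc j)"
  then obtain u v1 v2 z1 z2 where u: "u \<in> A" "h u = Suc j"
    and v: "v1 \<in> A" "v2 \<in> A" "v1 \<noteq> v2" "le v1 u" "le v2 u" "h v1 = j" "h v2 = j"
    and z: "z1 \<in> A" "z2 \<in> A" "z1 \<noteq> z2" "le u z1" "le u z2" "h z1 = Suc (Suc j)" "h z2 = Suc (Suc j)"
    unfolding cross_at_def by auto
  from assms[OF u] show False
  proof (elim disjE exE)
    fix w assume "{v \<in> A. h v = j \<and> le v u} \<subseteq> {w}"
    then show False using v by blast
  next
    fix w assume "{z \<in> A. h z = Suc (Suc j) \<and> le u z} \<subseteq> {w}"
    then show False using z by blast
  qed
qed

lemma order_iso_invariants: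
  assumes "ranked_on A le h" "ranked_on B le' h'" and bij: "bij_betw \<phi> A B"
    and iso: "\<And>u v. u \<in> A \<Longrightarrow> v \<in> A \<Longrightarrow> le' (\<phi> u) (\<phi> v) \<longleftrightarrow> le u v"
  shows "level_size B h' k = level_size A h k" and "cross_at B le' h' k \<longleftrightarrow> cross_at A le h k"
proof -
  let ?\<psi> = "inv_into A \<phi>"
  have rank: "\<And>u. u \<in> A \<Longrightarrow> h' (\<phi> u) = h u"
    using rank_preserved_by_order_iso[OF assms] .
  then show "level_size B h' k = level_size A h k" by (rule level_size_bij[OF bij])
  have \<psi>: "bij_betw ?\<psi> B A" by (rule bij_betw_inv_into[OF bij])
  have \<phi>\<psi>: "\<And>x. x \<in> B \<Longrightarrow> \<phi> (?\<psi> x) = x" by (rule bij_betw_inv_into_right[OF bij])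
  have \<psi>_in: "\<And>x. x \<in> B \<Longrightarrow> ?\<psi> x \<in> A" using bij_betwE[OF \<psi>] by blast
  show "cross_at B le' h' k \<longleftrightarrow> cross_at A le h k"
  proof
    assume "cross_at B le' h' k"
    then show "cross_at A le h k"
    proof (rule cross_at_image[OF _ bij_betw_imp_inj_on[OF \<psi>]])
      show "?\<psi> ` B \<subseteq> A" using \<psi>_in by blast
      show "le (?\<psi> x) (?\<psi> y)" if "x \<in> B" "y \<in> B" "le' x y" for x y
        using iso[OF \<psi>_in \<psi>_in] that \<phi>\<psi> by simp
      show "h (?\<psi> x) = h' x" if "x \<in> B" for x
        using rank[OF \<psi>_in[OF that]] \<phi>\<psi>[OF that] by simp
    qed
  next
    assume "cross_at A le h k"
    then show "cross_at B le' h' k"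
      by (rule cross_at_image[OF _ bij_betw_imp_inj_on[OF bij]])
        (use bij iso rank in \<open>auto simp: bij_betw_def\<close>)
  qed
qed

section \<open>Strip lattices\<close>

type_synonym node = "nat \<times> nat \<times> nat"

text \<open>\<open>(x, y, 0)\<close> is the grid point \<open>(x, y)\<close>; \<open>(x, y, t)\<close> with \<open>t > 0\<close> is an extra atom of the
  unit square from \<open>(x, y)\<close> to \<open>(x + 1, y + 1)\<close>, lying above the former and below the latter.\<close>

definition lift :: "nat \<Rightarrow> nat" where
  "lift t = (if t = 0 then 0 else 1)"

lemma lift_0 [simp]: "lift 0 = 0" and lift_pos [simp]: "t \<noteq> 0 \<Longrightarrow> lift t = 1"
  by (simp_all add: lift_def)

fun node_le :: "node \<Rightarrow> node \<Rightarrow> bool" where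
  "node_le (x, y, t) (x', y', t') \<longleftrightarrow>
     (x, y, t) = (x', y', t') \<or> (x + lift t \<le> x' \<and> y + lift t \<le> y')"

fun node_join :: "node \<Rightarrow> node \<Rightarrow> node" where
  "node_join (x, y, t) (x', y', t') =
     (if node_le (x, y, t) (x', y', t') then (x', y', t')
      else if node_le (x', y', t') (x, y, t) then (x, y, t)
      else (max (x + lift t) (x' + lift t'),
            max (y + lift t) (y' + lift t'), 0))"

fun node_meet :: "node \<Rightarrow> node \<Rightarrow> node" where
  "node_meet (x, y, t) (x', y', t') =
     (if node_le (x, y, t) (x', y', t') then (x, y, t)
      else if node_le (x', y', t') (x, y, t) then (x', y', t')
      else (min x x', min y y', 0))"

fun node_height :: "node \<Rightarrow> nat" where
  "node_height (x, y, t) = x + y + lift t"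

lemma node_le_refl: "node_le u u"
  by (cases u) auto

lemma node_le_antisym: "node_le u v \<Longrightarrow> node_le v u \<Longrightarrow> u = v"
  by (cases u; cases v) (auto simp: lift_def split: if_splits)

lemma node_le_trans: "node_le u v \<Longrightarrow> node_le v w \<Longrightarrow> node_le u w"
  by (cases u; cases v; cases w) (auto simp: lift_def split: if_splits)

lemma node_join_upper1: "node_le u (node_join u v)"
  by (cases u; cases v) (auto simp: lift_def split: if_splits)

lemma node_join_upper2: "node_le v (node_join u v)"
  by (cases u; cases v) (auto simp: lift_def split: if_splits)

lemma node_join_least: "node_le u w \<Longrightarrow> node_le v w \<Longrightarrow> node_le (node_join u v) w"
  by (cases u; cases v; cases w) (auto simp: lift_def split: if_splits)

lemma node_meet_lower1: "node_le (node_meet u v) u"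
  by (cases u; cases v) (auto simp: lift_def split: if_splits)

lemma node_meet_lower2: "node_le (node_meet u v) v"
  by (cases u; cases v) (auto simp: lift_def split: if_splits)

lemma node_meet_greatest: "node_le w u \<Longrightarrow> node_le w v \<Longrightarrow> node_le w (node_meet u v)"
  by (cases u; cases v; cases w) (auto simp: lift_def split: if_splits)

lemma node_height_strict_mono: "node_le u v \<Longrightarrow> u \<noteq> v \<Longrightarrow> node_height u < node_height v"
  by (cases u; cases v) (auto simp: lift_def split: if_splits)

lemma node_height_valuation:
  "node_height u + node_height v = node_height (node_join u v) + node_height (node_meet u v)"
  by (cases u; cases v) (auto simp: lift_def max_def min_def split: if_splits)

text \<open>Where the strip has width two (\<open>r k = l k + 1\<close>), the square whose two middle corners lie
  on level \<open>k\<close> receives \<open>e k\<close> extra atoms, which turns it into a copy of \<open>M\<^sub>n\<close> with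
  \<open>n = e k + 2\<close>.\<close>

locale strip =
  fixes H :: nat and l r e :: "nat \<Rightarrow> nat"
  assumes l_0: "l 0 = 0" and r_0: "r 0 = 0"
    and l_le_r: "l k \<le> r k" and r_le_Suc_l: "r k \<le> Suc (l k)"
    and r_step: "r (Suc k) = r k \<or> r (Suc k) = Suc (r k)"
    and l_step: "l (Suc k) = l k \<or> l (Suc k) = Suc (l k)"
    and l_top: "l H = r H"
begin

definition grid :: "(nat \<times> nat) set" where
  "grid = {(x, y). x + y \<le> H \<and> l (x + y) \<le> x \<and> x \<le> r (x + y)}"

abbreviation right_node :: "nat \<Rightarrow> node" where
  "right_node k \<equiv> (r k, k - r k, 0)"

abbreviation left_node :: "nat \<Rightarrow> node" where
  "left_node k \<equiv> (l k, k - l k, 0)"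

abbreviation atom :: "nat \<Rightarrow> nat \<Rightarrow> node" where
  "atom k t \<equiv> (l k, k - r k, t)"

definition nodes :: "node set" where
  "nodes = {(x, y, 0) | x y. (x, y) \<in> grid} \<union>
     {atom k t | k t. k \<le> H \<and> r k = Suc (l k) \<and> 1 \<le> t \<and> t \<le> e k}"

lemma r_mono: "i \<le> j \<Longrightarrow> r i \<le> r j"
proof (induction j rule: dec_induct)
  case (step n) then show ?case using r_step[of n] by auto
qed simp

lemma l_mono: "i \<le> j \<Longrightarrow> l i \<le> l j"
proof (induction j rule: dec_induct)
  case (step n) then show ?case using l_step[of n] by auto
qed simp

lemma r_lipschitz: "i \<le> j \<Longrightarrow> r j \<le> r i + (j - i)"
proof (induction j rule: dec_induct)
  case (step n) then show ?case using r_step[of n] by auto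
qed simp

lemma l_lipschitz: "i \<le> j \<Longrightarrow> l j \<le> l i + (j - i)"
proof (induction j rule: dec_induct)
  case (step n) then show ?case using l_step[of n] by auto
qed simp

lemma r_le: "r k \<le> k"
  using r_lipschitz[of 0 k] r_0 by simp

lemma l_le: "l k \<le> k"
  using r_le[of k] l_le_r[of k] by simp

lemma grid_top: "(x, y) \<in> grid \<Longrightarrow> x \<le> r H \<and> y + r H \<le> H"
  using r_mono[of "x + y" H] l_lipschitz[of "x + y" H] l_top unfolding grid_def by auto

lemma grid_min_closed: "(x, y) \<in> grid \<Longrightarrow> (x', y') \<in> grid \<Longrightarrow> (min x x', min y y') \<in> grid"
  using l_mono[of "x' + y" "x' + y'"] r_lipschitz[of "x' + y" "x + y"]
    l_mono[of "x + y'" "x + y"] r_lipschitz[of "x + y'" "x' + y'"]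
  unfolding grid_def by (auto simp: min_def)

lemma grid_max_closed: "(x, y) \<in> grid \<Longrightarrow> (x', y') \<in> grid \<Longrightarrow> (max x x', max y y') \<in> grid"
  using grid_top[of x y] grid_top[of x' y']
    r_mono[of "x + y" "x + max y y'"] r_mono[of "x' + y'" "x' + max y y'"]
    l_lipschitz[of "x + y" "max x x' + y"] l_lipschitz[of "x' + y'" "max x x' + y'"]
  unfolding grid_def by (auto simp: max_def)

lemma wide_level_bounds:
  assumes "k \<le> H" "r k = Suc (l k)"
  shows "0 < k" "k < H"
  using assms l_0 r_0 l_top by (auto intro: Nat.gr0I simp: order.order_iff_strict)

lemma atom_bottom_in_grid: "k \<le> H \<Longrightarrow> r k = Suc (l k) \<Longrightarrow> (l k, k - r k) \<in> grid"
  using wide_level_bounds[of k] l_mono[of "k - 1" k] r_lipschitz[of "k - 1" k] r_le[of k]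
  unfolding grid_def by auto

lemma atom_top_in_grid: "k \<le> H \<Longrightarrow> r k = Suc (l k) \<Longrightarrow> (Suc (l k), Suc (k - r k)) \<in> grid"
  using wide_level_bounds[of k] l_step[of k] r_step[of k] r_le[of k]
  unfolding grid_def by auto

lemma nodes_cases:
  assumes "u \<in> nodes"
  obtains (point) x y where "u = (x, y, 0)" "(x, y) \<in> grid"
    | (atom) k t where "u = atom k t" "k \<le> H" "r k = Suc (l k)" "1 \<le> t" "t \<le> e k"
  using assms unfolding nodes_def by blast

lemma point_in_nodes: "(x, y) \<in> grid \<Longrightarrow> (x, y, 0) \<in> nodes"
  unfolding nodes_def by blast

lemma corners_in_grid: "(x, y, t) \<in> nodes \<Longrightarrow> (x, y) \<in> grid \<and> (x + lift t, y + lift t) \<in> grid"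
  by (erule nodes_cases) (use atom_bottom_in_grid atom_top_in_grid in auto)

lemma valuated_lattice_nodes: "valuated_lattice nodes node_le node_join node_meet node_height"
proof unfold_locales
  show "nodes \<noteq> {}" using point_in_nodes[of 0 0] l_0 r_0 unfolding grid_def by auto
next
  fix u v assume "u \<in> nodes" "v \<in> nodes"
  moreover obtain x y t x' y' t' where "u = (x, y, t)" "v = (x', y', t')" by (cases u, cases v) auto
  ultimately show "node_join u v \<in> nodes" "node_meet u v \<in> nodes"
    using corners_in_grid grid_max_closed grid_min_closed point_in_nodes by auto
next
  fix u v w
  show "node_le u u" "node_le u (node_join u v)" "node_le v (node_join u v)"
    "node_le (node_meet u v) u" "node_le (node_meet u v) v"
    "node_height u + node_height v = node_height (node_join u v) + node_height (node_meet u v)"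
    by (rule node_le_refl node_join_upper1 node_join_upper2 node_meet_lower1 node_meet_lower2
        node_height_valuation)+
  show "node_le u v \<Longrightarrow> node_le v u \<Longrightarrow> u = v" by (rule node_le_antisym)
  show "node_le u v \<Longrightarrow> node_le v w \<Longrightarrow> node_le u w" by (rule node_le_trans)
  show "node_le u w \<Longrightarrow> node_le v w \<Longrightarrow> node_le (node_join u v) w" by (rule node_join_least)
  show "node_le w u \<Longrightarrow> node_le w v \<Longrightarrow> node_le w (node_meet u v)" by (rule node_meet_greatest)
  show "node_le u v \<Longrightarrow> u \<noteq> v \<Longrightarrow> node_height u < node_height v"
    by (rule node_height_strict_mono)
qed

lemma nodes_at_level:
  assumes "u \<in> nodes" "node_height u = k"
  shows "k \<le> H \<and> (u = right_node k \<or> u = left_node k \<or>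
           (\<exists>t. u = atom k t \<and> r k = Suc (l k) \<and> 1 \<le> t \<and> t \<le> e k))"
  using assms(1)
proof (cases rule: nodes_cases)
  case (point x y)
  then show ?thesis
    using assms(2) r_le_Suc_l[of k] unfolding grid_def by (cases "x = r k") auto
next
  case (atom k' t)
  then show ?thesis using assms(2) r_le[of k'] wide_level_bounds[of k'] by auto
qed

lemma right_node_in_nodes: "k \<le> H \<Longrightarrow> right_node k \<in> nodes"
  using point_in_nodes[of "r k" "k - r k"] r_le[of k] l_le_r[of k] unfolding grid_def by simp

lemma left_node_in_nodes: "k \<le> H \<Longrightarrow> left_node k \<in> nodes"
  using point_in_nodes[of "l k" "k - l k"] l_le[of k] l_le_r[of k] unfolding grid_def by simp

lemma atom_in_nodes: "k \<le> H \<Longrightarrow> r k = Suc (l k) \<Longrightarrow> 1 \<le> t \<Longrightarrow> t \<le> e k \<Longrightarrow> atom k t \<in> nodes"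
  unfolding nodes_def by blast

lemma node_height_right_node [simp]: "node_height (right_node k) = k"
  using r_le[of k] by simp

lemma node_height_left_node [simp]: "node_height (left_node k) = k"
  using l_le[of k] by simp

lemma level_eq:
  assumes "k \<le> H"
  shows "{u \<in> nodes. node_height u = k} = {right_node k, left_node k} \<union>
           atom k ` {t. 1 \<le> t \<and> t \<le> e k \<and> r k = Suc (l k)}" (is "?L = ?R")
proof
  show "?L \<subseteq> ?R" using nodes_at_level by blast
  show "?R \<subseteq> ?L"
    using right_node_in_nodes[OF assms] left_node_in_nodes[OF assms] atom_in_nodes[OF assms]
      r_le[of k] l_le[of k] by auto
qed

lemma level_size_nodes:
  assumes "k \<le> H"
  shows "level_size nodes node_height k = (if r k = l k then 1 else 2 + e k)"
proof (cases "r k = l k")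
  case True
  then show ?thesis using level_eq[OF assms] by (simp add: level_size_def)
next
  case False
  then have "r k = Suc (l k)" using l_le_r[of k] r_le_Suc_l[of k] by linarith
  then have "{u \<in> nodes. node_height u = k} = {right_node k, left_node k} \<union> atom k ` {1..e k}"
    "{right_node k, left_node k} \<inter> atom k ` {1..e k} = {}"
    using level_eq[OF assms] by auto
  moreover have "card (atom k ` {1..e k}) = e k" by (simp add: card_image inj_on_def)
  ultimately show ?thesis using False
    by (simp add: level_size_def card_Un_disjoint)
qed

lemma nodes_by_level: "nodes = (\<Union>k\<le>H. {u \<in> nodes. node_height u = k})"
  using nodes_at_level by auto

lemma finite_level: "finite {u \<in> nodes. node_height u = k}"
proof (cases "k \<le> H")
  case False
  then have "{u \<in> nodes. node_height u = k} = {}" using nodes_at_level by blast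
  then show ?thesis by (simp only: finite.emptyI)
qed (simp add: level_eq)

lemma finite_nodes: "finite nodes"
  by (subst nodes_by_level) (simp add: finite_level)

lemma card_nodes: "card nodes = (\<Sum>k\<le>H. if r k = l k then 1 else 2 + e k)"
proof -
  have "card nodes = (\<Sum>k\<le>H. level_size nodes node_height k)"
    unfolding level_size_def by (subst nodes_by_level, rule card_UN_disjoint) (auto simp: finite_level)
  then show ?thesis by (simp add: level_size_nodes)
qed

lemma lower_cover:
  assumes "u \<in> nodes" "0 < node_height u"
  shows "\<exists>v\<in>nodes. node_le v u \<and> v \<noteq> u \<and> Suc (node_height v) = node_height u"
  using assms(1)
proof (cases rule: nodes_cases)
  case (point x y)
  then obtain j where j: "x + y = Suc j" using assms(2) by (cases "x + y") auto
  show ?thesis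
  proof (cases "x \<le> r j")
    case True
    then have "0 < y" "(x, y - 1) \<in> grid"
      using point j r_le[of j] l_step[of j] unfolding grid_def by auto
    then show ?thesis using point j point_in_nodes by (intro bexI[of _ "(x, y - 1, 0)"]) auto
  next
    case False
    then have "x = Suc (r j)" "(x - 1, y) \<in> grid"
      using point j r_step[of j] l_le_r[of j] unfolding grid_def by auto
    then show ?thesis using point j point_in_nodes by (intro bexI[of _ "(x - 1, y, 0)"]) auto
  qed
next
  case (atom k t)
  then show ?thesis using atom_bottom_in_grid[of k] point_in_nodes r_le[of k]
    by (intro bexI[of _ "(l k, k - r k, 0)"]) auto
qed

lemma ranked_on_nodes: "ranked_on nodes node_le node_height"
  unfolding ranked_on_def using node_height_strict_mono lower_cover by blast

lemma cross_at_if_turn: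
  assumes H: "Suc (Suc j) \<le> H" and wide: "r j = Suc (l j)" "r (Suc (Suc j)) = Suc (l (Suc (Suc j)))"
    and turn: "r (Suc (Suc j)) = Suc (r j)"
  shows "cross_at nodes node_le node_height (Suc j)"
proof -
  define u where "u = (r j, Suc j - r j, 0::nat)" \<comment> \<open>the join of the two nodes of level \<open>j\<close>\<close>
  have "(r j, Suc j - r j) \<in> grid"
    using H wide r_le[of j] l_step[of j] r_step[of j] unfolding grid_def by auto
  then have u: "u \<in> nodes" "node_height u = Suc j" unfolding u_def using r_le[of j] by (auto intro: point_in_nodes)
  have "j \<le> H" using H by simp
  note in_nodes = right_node_in_nodes left_node_in_nodes
  have "right_node j \<noteq> left_node j" "right_node (Suc (Suc j)) \<noteq> left_node (Suc (Suc j))"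
    using wide by simp_all
  moreover have "node_le (right_node j) u" "node_le (left_node j) u"
    "node_le u (right_node (Suc (Suc j)))" "node_le u (left_node (Suc (Suc j)))"
    unfolding u_def using wide turn r_le[of j] by auto
  moreover note u in_nodes[OF \<open>j \<le> H\<close>] in_nodes[OF H]
    node_height_right_node[of j] node_height_left_node[of j]
    node_height_right_node[of "Suc (Suc j)"] node_height_left_node[of "Suc (Suc j)"]
  ultimately show ?thesis unfolding cross_at_def by (smt (verit))
qed

lemma x_straight_unique_neighbour:
  assumes wide: "r j = Suc (l j)" "r (Suc j) = Suc (l (Suc j))" "r (Suc (Suc j)) = Suc (l (Suc (Suc j)))"
    and steps: "r (Suc j) = Suc (r j)" "r (Suc (Suc j)) = Suc (Suc (r j))"
    and u: "u \<in> nodes" "node_height u = Suc j"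
  shows "{v \<in> nodes. node_height v = j \<and> node_le v u} \<subseteq> {right_node j} \<or>
    {z \<in> nodes. node_height z = Suc (Suc j) \<and> node_le u z} \<subseteq> {left_node (Suc (Suc j))}"
proof (cases "u = left_node (Suc j)")
  case True
  have "z = left_node (Suc (Suc j))" if "z \<in> nodes" "node_height z = Suc (Suc j)" "node_le u z" for z
    using nodes_at_level[OF that(1,2)] that(3) True steps wide r_le[of j] by auto
  then show ?thesis by blast
next
  case False
  have "v = right_node j" if "v \<in> nodes" "node_height v = j" "node_le v u" for v
    using nodes_at_level[OF that(1,2)] that(3) nodes_at_level[OF u] False steps wide r_le[of j] by auto
  then show ?thesis by blast
qed

lemma y_straight_unique_neighbour:
  assumes wide: "r j = Suc (l j)" "r (Suc j) = Suc (l (Suc j))" "r (Suc (Suc j)) = Suc (l (Suc (Suc j)))"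
    and steps: "r (Suc j) = r j" "r (Suc (Suc j)) = r j"
    and u: "u \<in> nodes" "node_height u = Suc j"
  shows "{v \<in> nodes. node_height v = j \<and> node_le v u} \<subseteq> {left_node j} \<or>
    {z \<in> nodes. node_height z = Suc (Suc j) \<and> node_le u z} \<subseteq> {right_node (Suc (Suc j))}"
proof (cases "u = right_node (Suc j)")
  case True
  have "z = right_node (Suc (Suc j))" if "z \<in> nodes" "node_height z = Suc (Suc j)" "node_le u z" for z
    using nodes_at_level[OF that(1,2)] that(3) True steps wide r_le[of j] by auto
  then show ?thesis by blast
next
  case False
  have "v = left_node j" if "v \<in> nodes" "node_height v = j" "node_le v u" for v
    using nodes_at_level[OF that(1,2)] that(3) nodes_at_level[OF u] False steps wide r_le[of j] by auto
  then show ?thesis by blast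
qed

lemma no_cross_if_straight:
  assumes wide: "r j = Suc (l j)" "r (Suc j) = Suc (l (Suc j))" "r (Suc (Suc j)) = Suc (l (Suc (Suc j)))"
    and straight: "r (Suc (Suc j)) \<noteq> Suc (r j)"
  shows "\<not> cross_at nodes node_le node_height (Suc j)"
proof (rule not_cross_atI)
  fix u assume u: "u \<in> nodes" "node_height u = Suc j"
  consider (x) "r (Suc j) = Suc (r j)" "r (Suc (Suc j)) = Suc (Suc (r j))"
    | (y) "r (Suc j) = r j" "r (Suc (Suc j)) = r j"
    using r_step[of j] r_step[of "Suc j"] straight by auto
  then show "(\<exists>w. {v \<in> nodes. node_height v = j \<and> node_le v u} \<subseteq> {w}) \<or>
      (\<exists>w. {z \<in> nodes. node_height z = Suc (Suc j) \<and> node_le u z} \<subseteq> {w})"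
  proof cases
    case x
    then show ?thesis using x_straight_unique_neighbour[OF wide x u] by blast
  next
    case y
    then show ?thesis using y_straight_unique_neighbour[OF wide y u] by blast
  qed
qed

lemma cross_at_iff_turn:
  assumes "Suc (Suc j) \<le> H" "r j = Suc (l j)" "r (Suc j) = Suc (l (Suc j))"
    "r (Suc (Suc j)) = Suc (l (Suc (Suc j)))"
  shows "cross_at nodes node_le node_height (Suc j) \<longleftrightarrow> r (Suc (Suc j)) = Suc (r j)"
  using cross_at_if_turn[OF assms(1,2,4)] no_cross_if_straight[OF assms(2-4)] by blast

end

section \<open>Codes\<close>

text \<open>Entry \<open>i\<close> of a code (counting from 0) describes level \<open>i + 1\<close> of a strip lattice: how the
  boundaries \<open>l\<close> and \<open>r\<close> move, and how many extra atoms (at most 5) the level receives if it has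
  width two. The state records whether the current level is narrow, freshly opened or wide. After \<open>Open\<close> the two
  shifts cannot be told apart, since a turn only shows when the two preceding levels are wide, so
  only \<open>Shift_x\<close> is allowed there.\<close>

datatype step = Chain | Open | Shift_x | Shift_y | Close

type_synonym entry = "step \<times> nat"

datatype state = Narrow | Opened | Wide

fun allowed :: "state \<Rightarrow> step \<Rightarrow> bool" where
  "allowed Narrow k \<longleftrightarrow> k = Chain \<or> k = Open"
| "allowed Opened k \<longleftrightarrow> k = Shift_x \<or> k = Close"
| "allowed Wide k \<longleftrightarrow> k = Shift_x \<or> k = Shift_y \<or> k = Close"

fun wide :: "step \<Rightarrow> bool" where
  "wide k \<longleftrightarrow> k = Open \<or> k = Shift_x \<or> k = Shift_y"

fun admissible :: "state \<Rightarrow> entry \<Rightarrow> bool" where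
  "admissible s (k, e) \<longleftrightarrow> allowed s k \<and> (if wide k then e \<le> 5 else e = 0)"

fun target :: "step \<Rightarrow> state" where
  "target Chain = Narrow" | "target Open = Opened" | "target Shift_x = Wide"
| "target Shift_y = Wide" | "target Close = Narrow"

fun run :: "state \<Rightarrow> entry list \<Rightarrow> state option" where
  "run s [] = Some s"
| "run s (a # c) = (if admissible s a then run (target (fst a)) c else None)"

definition valid_code :: "entry list \<Rightarrow> bool" where
  "valid_code c \<longleftrightarrow> run Narrow c = Some Narrow"

fun entry_weight :: "entry \<Rightarrow> nat" where
  "entry_weight (k, e) = (if wide k then 2 + e else 1)"

definition weight :: "entry list \<Rightarrow> nat" where
  "weight c = sum_list (map entry_weight c)"

fun r_inc :: "step \<Rightarrow> nat" where
  "r_inc Chain = 1" | "r_inc Open = 1" | "r_inc Shift_x = 1" | "r_inc Shift_y = 0" | "r_inc Close = 0"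

fun l_inc :: "step \<Rightarrow> nat" where
  "l_inc Chain = 1" | "l_inc Open = 0" | "l_inc Shift_x = 1" | "l_inc Shift_y = 0" | "l_inc Close = 1"

fun gap :: "state \<Rightarrow> nat" where
  "gap Narrow = 0" | "gap Opened = 1" | "gap Wide = 1"

definition right_bound :: "entry list \<Rightarrow> nat \<Rightarrow> nat" where
  "right_bound c j = sum_list (map (r_inc \<circ> fst) (take j c))"

definition left_bound :: "entry list \<Rightarrow> nat \<Rightarrow> nat" where
  "left_bound c j = sum_list (map (l_inc \<circ> fst) (take j c))"

definition atoms :: "entry list \<Rightarrow> nat \<Rightarrow> nat" where
  "atoms c j = (if 0 < j \<and> j \<le> length c then snd (c ! (j - 1)) else 0)"

lemma run_append: "run s (p @ q) = (case run s p of None \<Rightarrow> None | Some s' \<Rightarrow> run s' q)"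
  by (induction p arbitrary: s) auto

lemma run_snoc_Some:
  "run s (p @ [a]) = Some t \<Longrightarrow> \<exists>s'. run s p = Some s' \<and> admissible s' a \<and> t = target (fst a)"
  by (auto simp: run_append split: option.splits if_splits)

lemma valid_code_prefix: "valid_code c \<Longrightarrow> \<exists>s. run Narrow (take j c) = Some s"
  using run_append[of Narrow "take j c" "drop j c"] unfolding valid_code_def
  by (auto split: option.splits)

lemma valid_code_split: "valid_code (p @ a # q) \<Longrightarrow> \<exists>s. run Narrow p = Some s \<and> admissible s a"
  unfolding valid_code_def by (auto simp: run_append split: option.splits if_splits)

lemma gap_target: "gap (target k) = (if wide k then 1 else 0)"
  by (cases k) auto

lemma gap_le: "gap s \<le> 1"
  by (cases s) auto

lemma r_inc_le: "r_inc k \<le> 1" and l_inc_le: "l_inc k \<le> 1"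
  by (cases k; simp)+

lemma gap_step: "admissible s a \<Longrightarrow> gap (target (fst a)) + l_inc (fst a) = gap s + r_inc (fst a)"
  by (cases a; cases s; cases "fst a") auto

lemma run_gap:
  "run Narrow p = Some s \<Longrightarrow> (\<Sum>a\<leftarrow>p. r_inc (fst a)) = (\<Sum>a\<leftarrow>p. l_inc (fst a)) + gap s"
proof (induction p arbitrary: s rule: rev_induct)
  case (snoc a p)
  then obtain s' where "run Narrow p = Some s'" "admissible s' a" "s = target (fst a)"
    using run_snoc_Some by blast
  with snoc.IH gap_step show ?case by fastforce
qed simp

lemma right_bound_eq_run:
  "run Narrow (take j c) = Some s \<Longrightarrow> right_bound c j = left_bound c j + gap s"
  using run_gap unfolding right_bound_def left_bound_def comp_def by blast

lemma right_bound_eq: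
  assumes "valid_code c"
  obtains s where "run Narrow (take j c) = Some s" "right_bound c j = left_bound c j + gap s"
  using valid_code_prefix[OF assms] right_bound_eq_run by blast

lemma bound_step:
  "right_bound c (Suc j) = right_bound c j \<or> right_bound c (Suc j) = Suc (right_bound c j)"
  "left_bound c (Suc j) = left_bound c j \<or> left_bound c (Suc j) = Suc (left_bound c j)"
  using r_inc_le[of "fst (c ! j)"] l_inc_le[of "fst (c ! j)"]
  unfolding right_bound_def left_bound_def
  by (cases "j < length c"; auto simp: take_Suc_conv_app_nth)+

lemma strip_code: "valid_code c \<Longrightarrow> strip (length c) (left_bound c) (right_bound c)"
proof
  assume c: "valid_code c"
  show "left_bound c 0 = 0" "right_bound c 0 = 0" by (simp_all add: left_bound_def right_bound_def)
  have "left_bound c j \<le> right_bound c j \<and> right_bound c j \<le> Suc (left_bound c j)" for j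
  proof -
    obtain s where "right_bound c j = left_bound c j + gap s" using right_bound_eq[OF c] by blast
    then show ?thesis using gap_le[of s] by simp
  qed
  then show "left_bound c j \<le> right_bound c j" "right_bound c j \<le> Suc (left_bound c j)" for j
    by simp_all
  show "right_bound c (Suc j) = right_bound c j \<or> right_bound c (Suc j) = Suc (right_bound c j)"
    "left_bound c (Suc j) = left_bound c j \<or> left_bound c (Suc j) = Suc (left_bound c j)" for j
    by (rule bound_step)+
  show "left_bound c (length c) = right_bound c (length c)"
    by (rule right_bound_eq[OF c, of "length c"]) (use c in \<open>simp add: valid_code_def\<close>)
qed

definition code_nodes :: "entry list \<Rightarrow> node set" where
  "code_nodes c = strip.nodes (length c) (left_bound c) (right_bound c) (atoms c)"

lemma level_weight:
  assumes c: "valid_code c" and k: "k < length c"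
  shows "(if right_bound c (Suc k) = left_bound c (Suc k) then 1 else 2 + atoms c (Suc k)) =
    entry_weight (c ! k)"
proof -
  obtain t where t: "run Narrow (take (Suc k) c) = Some t"
    "right_bound c (Suc k) = left_bound c (Suc k) + gap t"
    by (rule right_bound_eq[OF c])
  then have "run Narrow (take k c @ [c ! k]) = Some t" using k by (simp add: take_Suc_conv_app_nth)
  then have "t = target (fst (c ! k))" using run_snoc_Some by blast
  moreover have "atoms c (Suc k) = snd (c ! k)" using k by (simp add: atoms_def)
  ultimately show ?thesis using t(2) gap_target by (cases "c ! k") auto
qed

lemma card_code_nodes:
  assumes c: "valid_code c"
  shows "card (code_nodes c) = Suc (weight c)"
proof -
  interpret strip "length c" "left_bound c" "right_bound c" "atoms c" by (rule strip_code[OF c])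
  have "card (code_nodes c) =
      (\<Sum>k\<le>length c. if right_bound c k = left_bound c k then 1 else 2 + atoms c k)"
    unfolding code_nodes_def by (rule card_nodes)
  also have "\<dots> = 1 + (\<Sum>k<length c.
      if right_bound c (Suc k) = left_bound c (Suc k) then 1 else 2 + atoms c (Suc k))"
    unfolding lessThan_Suc_atMost[symmetric] sum.lessThan_Suc_shift
    by (simp add: right_bound_def left_bound_def)
  also have "\<dots> = Suc (weight c)"
    using level_weight[OF c] unfolding weight_def by (simp add: sum_list_sum_nth atLeast0LessThan)
  finally show ?thesis .
qed

lemma level_size_code_nodes:
  assumes c: "valid_code c" and k: "k < length c"
  shows "level_size (code_nodes c) node_height (Suc k) = entry_weight (c ! k)"
proof -
  interpret strip "length c" "left_bound c" "right_bound c" "atoms c" by (rule strip_code[OF c])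
  show ?thesis unfolding code_nodes_def using level_size_nodes[of "Suc k"] k level_weight[OF c k] by simp
qed

lemma cross_at_code_nodes:
  assumes c: "valid_code c" and split: "c = p @ a # q" and p: "run Narrow p = Some Wide"
    and a: "wide (fst a)"
  shows "cross_at (code_nodes c) node_le node_height (length p) \<longleftrightarrow>
    r_inc (fst a) \<noteq> r_inc (fst (last p))"
proof -
  interpret strip "length c" "left_bound c" "right_bound c" "atoms c" by (rule strip_code[OF c])
  obtain p' b where p': "p = p' @ [b]" using p by (cases p rule: rev_cases) auto
  then obtain s where s: "run Narrow p' = Some s" "admissible s b" "target (fst b) = Wide"
    using run_snoc_Some[of Narrow p' b Wide] p by auto
  then have "gap s = 1" by (cases s; cases b; cases "fst b") auto
  have "admissible Wide a" using valid_code_split[of p a q] c split p by auto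
  with a have "target (fst a) = Wide" by (cases a; cases "fst a") auto
  with p have pa: "run Narrow (p @ [a]) = Some Wide" using \<open>admissible Wide a\<close> by (simp add: run_append)
  define j where "j = length p'"
  have takes: "take j c = p'" "take (Suc j) c = p" "take (Suc (Suc j)) c = p @ [a]"
    using split p' unfolding j_def by simp_all
  have "Suc (Suc j) \<le> length c" using split p' unfolding j_def by simp
  moreover have "right_bound c j = Suc (left_bound c j)"
    "right_bound c (Suc j) = Suc (left_bound c (Suc j))"
    "right_bound c (Suc (Suc j)) = Suc (left_bound c (Suc (Suc j)))"
    using right_bound_eq_run[of j c] right_bound_eq_run[of "Suc j" c]
      right_bound_eq_run[of "Suc (Suc j)" c] s(1) \<open>gap s = 1\<close> p pa takes by simp_all
  ultimately have "cross_at (code_nodes c) node_le node_height (Suc j) \<longleftrightarrow>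
      right_bound c (Suc (Suc j)) = Suc (right_bound c j)"
    unfolding code_nodes_def by (rule cross_at_iff_turn)
  moreover have "right_bound c (Suc (Suc j)) = right_bound c j + r_inc (fst b) + r_inc (fst a)"
    using takes p' unfolding right_bound_def by simp
  ultimately show ?thesis
    using r_inc_le[of "fst a"] r_inc_le[of "fst b"] p' unfolding j_def
    by (cases "r_inc (fst a)"; cases "r_inc (fst b)") auto
qed

lemma weight_pos: "q \<noteq> [] \<Longrightarrow> 0 < weight q"
proof (cases q)
  case (Cons a q')
  then show ?thesis by (cases a) (simp add: weight_def)
qed simp

lemma prefix_weight_eq:
  assumes "prefix p c" "weight p = weight c"
  shows "p = c"
proof -
  obtain q where "c = p @ q" using assms(1) by (rule prefixE)
  moreover have "weight c = weight p + weight q" unfolding \<open>c = p @ q\<close> by (simp add: weight_def)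
  ultimately show ?thesis using assms(2) weight_pos[of q] by auto
qed

lemma code_eq_of_invariants:
  assumes c1: "valid_code c1" and c2: "valid_code c2" and w: "weight c1 = weight c2"
    and level: "\<And>k. level_size (code_nodes c1) node_height k = level_size (code_nodes c2) node_height k"
    and cross: "\<And>k. cross_at (code_nodes c1) node_le node_height k \<longleftrightarrow>
      cross_at (code_nodes c2) node_le node_height k"
  shows "c1 = c2"
proof (rule ccontr)
  assume "c1 \<noteq> c2"
  with w have "c1 \<parallel> c2" using prefix_weight_eq by (metis parallelI)
  then obtain p a1 a2 q1 q2 where a: "a1 \<noteq> a2" and split: "c1 = p @ a1 # q1" "c2 = p @ a2 # q2"
    using parallel_decomp by blast
  obtain s where s: "run Narrow p = Some s" "admissible s a1"
    using valid_code_split c1 split(1) by blast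
  have "admissible s a2" using valid_code_split[of p a2 q2] c2 split(2) s(1) by auto
  have "entry_weight a1 = entry_weight a2"
    using level[of "Suc (length p)"] level_size_code_nodes[OF c1, of "length p"]
      level_size_code_nodes[OF c2, of "length p"] split by simp
  moreover obtain k1 e1 k2 e2 where ke: "a1 = (k1, e1)" "a2 = (k2, e2)" by fastforce
  ultimately have "wide k1" "wide k2" "s = Wide" "r_inc k1 \<noteq> r_inc k2"
    using a s \<open>admissible s a2\<close> by (cases s; cases k1; cases k2; auto split: if_splits)+
  then show False
    using cross[of "length p"] cross_at_code_nodes[OF c1 split(1)] cross_at_code_nodes[OF c2 split(2)]
      s(1) ke r_inc_le[of k1] r_inc_le[of k2] r_inc_le[of "fst (last p)"] by auto
qed

section \<open>Counting codes\<close>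

definition codes :: "state \<Rightarrow> nat \<Rightarrow> entry list set" where
  "codes s n = {c. run s c = Some Narrow \<and> weight c = n}"

lemma UNIV_step: "(UNIV :: step set) = {Chain, Open, Shift_x, Shift_y, Close}"
  by (auto intro: step.exhaust)

lemma run_atoms_le: "run s c = Some t \<Longrightarrow> a \<in> set c \<Longrightarrow> snd a \<le> 5"
proof (induction c arbitrary: s)
  case (Cons b c)
  then show ?case by (cases b) (auto split: if_splits)
qed simp

lemma length_le_weight: "length c \<le> weight c"
proof (induction c)
  case (Cons a c)
  then show ?case by (cases a) (auto simp: weight_def)
qed (simp add: weight_def)

lemma finite_codes: "finite (codes s n)"
proof (rule finite_subset)
  show "codes s n \<subseteq> {c. set c \<subseteq> UNIV \<times> {..5} \<and> length c \<le> n}"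
    unfolding codes_def using run_atoms_le length_le_weight by fastforce
  show "finite {c. set c \<subseteq> (UNIV :: step set) \<times> {..5::nat} \<and> length c \<le> n}"
    by (rule finite_lists_length_le) (simp add: UNIV_step)
qed

lemma sum_card_codes_le:
  assumes "finite E" and E: "\<And>a. a \<in> E \<Longrightarrow> admissible s a \<and> entry_weight a \<le> n"
  shows "(\<Sum>a\<in>E. card (codes (target (fst a)) (n - entry_weight a))) \<le> card (codes s n)"
proof -
  let ?C = "\<lambda>a. (Cons a) ` codes (target (fst a)) (n - entry_weight a)"
  have "(\<Union>a\<in>E. ?C a) \<subseteq> codes s n"
  proof clarify
    fix a c assume "a \<in> E" "c \<in> codes (target (fst a)) (n - entry_weight a)"
    then show "a # c \<in> codes s n" using E[of a] unfolding codes_def weight_def by simp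
  qed
  then have "card (\<Union>a\<in>E. ?C a) \<le> card (codes s n)" by (rule card_mono[OF finite_codes])
  moreover have "card (\<Union>a\<in>E. ?C a) = (\<Sum>a\<in>E. card (?C a))"
    by (rule card_UN_disjoint) (use assms(1) finite_codes in auto)
  ultimately show ?thesis by (simp add: card_image)
qed

abbreviation num_codes :: "state \<Rightarrow> nat \<Rightarrow> real" where
  "num_codes s n \<equiv> real (card (codes s n))"

lemma num_codes_Narrow:
  assumes "7 \<le> n"
  shows "num_codes Narrow (n - 1) + (\<Sum>e\<le>5. num_codes Opened (n - (2 + e))) \<le> num_codes Narrow n"
proof -
  let ?E = "insert (Chain, 0) (Pair Open ` {..5})"
  have "(\<Sum>a\<in>?E. card (codes (target (fst a)) (n - entry_weight a))) \<le> card (codes Narrow n)"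
    by (rule sum_card_codes_le) (use assms in auto)
  moreover have "(\<Sum>a\<in>?E. card (codes (target (fst a)) (n - entry_weight a))) =
      card (codes Narrow (n - 1)) + (\<Sum>e\<le>5. card (codes Opened (n - (2 + e))))"
    by (subst sum.insert) (auto simp: sum.reindex inj_on_def)
  ultimately show ?thesis by (simp flip: of_nat_sum)
qed

lemma num_codes_Opened:
  assumes "7 \<le> n"
  shows "num_codes Narrow (n - 1) + (\<Sum>e\<le>5. num_codes Wide (n - (2 + e))) \<le> num_codes Opened n"
proof -
  let ?E = "insert (Close, 0) (Pair Shift_x ` {..5})"
  have "(\<Sum>a\<in>?E. card (codes (target (fst a)) (n - entry_weight a))) \<le> card (codes Opened n)"
    by (rule sum_card_codes_le) (use assms in auto)
  moreover have "(\<Sum>a\<in>?E. card (codes (target (fst a)) (n - entry_weight a))) =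
      card (codes Narrow (n - 1)) + (\<Sum>e\<le>5. card (codes Wide (n - (2 + e))))"
    by (subst sum.insert) (auto simp: sum.reindex inj_on_def)
  ultimately show ?thesis by (simp flip: of_nat_sum)
qed

lemma num_codes_Wide:
  assumes "7 \<le> n"
  shows "num_codes Narrow (n - 1) + 2 * (\<Sum>e\<le>5. num_codes Wide (n - (2 + e))) \<le> num_codes Wide n"
proof -
  let ?E = "insert (Close, 0) (Pair Shift_x ` {..5} \<union> Pair Shift_y ` {..5})"
  have "(\<Sum>a\<in>?E. card (codes (target (fst a)) (n - entry_weight a))) \<le> card (codes Wide n)"
    by (rule sum_card_codes_le) (use assms in auto)
  moreover have "Pair Shift_x ` {..5::nat} \<inter> Pair Shift_y ` {..5} = {}" by auto
  then have "(\<Sum>a\<in>?E. card (codes (target (fst a)) (n - entry_weight a))) =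
      card (codes Narrow (n - 1)) + 2 * (\<Sum>e\<le>5. card (codes Wide (n - (2 + e))))"
    by (subst sum.insert) (auto simp: sum.union_disjoint sum.reindex inj_on_def)
  ultimately show ?thesis by (simp flip: of_nat_sum)
qed

lemma codes_nonempty:
  assumes "1 \<le> n"
  shows "codes s n \<noteq> {}"
proof -
  have chain: "replicate k (Chain, 0) \<in> codes Narrow k" for k
    unfolding codes_def by (induction k) (auto simp: weight_def)
  show ?thesis
  proof (cases "s = Narrow")
    case False
    then have "(Close, 0) # replicate (n - 1) (Chain, 0) \<in> codes s n"
      using chain[of "n - 1"] assms unfolding codes_def by (cases s) (auto simp: weight_def)
    then show ?thesis by blast
  qed (use chain in blast)
qed

definition rho :: real where "rho = 2.1332"

definition rho_sum :: real where "rho_sum = (\<Sum>i\<le>5. rho ^ i)"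

fun coeff :: "state \<Rightarrow> real" where
  "coeff Narrow = 1" | "coeff Opened = 7/5" | "coeff Wide = 5/2"

text \<open>By \<open>rho_recurrences\<close>, \<open>coeff s * rho ^ n / 1000\<close> is a sub-solution of the recurrences
  for the number of codes; the factor \<open>1/1000\<close> makes it at most 1 for \<open>n \<le> 7\<close>, the largest
  entry weight, where the recurrences do not apply.\<close>

lemma rho_recurrences:
  "coeff Narrow * rho ^ 7 \<le> rho ^ 6 + coeff Opened * rho_sum"
  "coeff Opened * rho ^ 7 \<le> rho ^ 6 + coeff Wide * rho_sum"
  "coeff Wide * rho ^ 7 \<le> rho ^ 6 + 2 * (coeff Wide * rho_sum)"
  unfolding rho_sum_def rho_def by (simp_all add: eval_nat_numeral)

lemma coeff_rho_pow_le: "n \<le> 7 \<Longrightarrow> coeff s * rho ^ n / 1000 \<le> 1"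
proof -
  assume "n \<le> 7"
  then have "rho ^ n \<le> rho ^ 7" by (rule power_increasing) (simp add: rho_def)
  moreover have "coeff s * rho ^ 7 \<le> 1000" "0 \<le> coeff s" by (cases s; simp add: rho_def eval_nat_numeral)+
  ultimately have "coeff s * rho ^ n \<le> 1000"
    using mult_left_mono[of "rho ^ n" "rho ^ 7" "coeff s"] by linarith
  then show ?thesis by simp
qed

lemma coeff_rho_pow_split:
  assumes "coeff s * rho ^ 7 \<le> rho ^ 6 + Q"
  shows "coeff s * rho ^ (m + 7) / 1000 \<le> rho ^ (m + 6) / 1000 + rho ^ m * Q / 1000"
proof -
  have "rho ^ m * (coeff s * rho ^ 7) \<le> rho ^ m * (rho ^ 6 + Q)"
    using assms by (rule mult_left_mono) (simp add: rho_def)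
  then show ?thesis by (simp add: power_add algebra_simps divide_right_mono)
qed

lemma sum_num_codes_ge:
  assumes IH: "\<And>k. 1 \<le> k \<Longrightarrow> k < m + 7 \<Longrightarrow> coeff s * rho ^ k / 1000 \<le> num_codes s k"
    and "1 \<le> m"
  shows "rho ^ m * (coeff s * rho_sum) / 1000 \<le> (\<Sum>e\<le>5. num_codes s (m + 7 - (2 + e)))"
proof -
  have "{..5::nat} = {0, 1, 2, 3, 4, 5}" by auto
  then have "rho ^ m * (coeff s * rho_sum) / 1000 = (\<Sum>e\<le>5. coeff s * rho ^ (m + 7 - (2 + e)) / 1000)"
    unfolding rho_sum_def by (simp add: power_add algebra_simps power2_eq_square)
  also have "\<dots> \<le> (\<Sum>e\<le>5. num_codes s (m + 7 - (2 + e)))"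
    by (rule sum_mono) (use IH \<open>1 \<le> m\<close> in auto)
  finally show ?thesis .
qed

lemma num_codes_lower_bound: "1 \<le> n \<Longrightarrow> coeff s * rho ^ n / 1000 \<le> num_codes s n"
proof (induction n arbitrary: s rule: less_induct)
  case (less n)
  show ?case
  proof (cases "n \<le> 7")
    case True
    have "0 < card (codes s n)" using codes_nonempty[OF less.prems] finite_codes by (simp add: card_gt_0_iff)
    then show ?thesis using coeff_rho_pow_le[OF True, of s] by linarith
  next
    case False
    define m where "m = n - 7"
    have n: "n = m + 7" "7 \<le> n" "1 \<le> m" using False unfolding m_def by simp_all
    have chain: "rho ^ (m + 6) / 1000 \<le> num_codes Narrow (n - 1)"
      using less.IH[of "m + 6" Narrow] n by (simp add: add.commute)
    have sums: "rho ^ m * (coeff s' * rho_sum) / 1000 \<le> (\<Sum>e\<le>5. num_codes s' (n - (2 + e)))" for s'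
      using sum_num_codes_ge[of m s'] less.IH n by simp
    note split = coeff_rho_pow_split[OF rho_recurrences(1)] coeff_rho_pow_split[OF rho_recurrences(2)]
      coeff_rho_pow_split[OF rho_recurrences(3)]
    show ?thesis
    proof (cases s)
      case Narrow
      show ?thesis using split(1)[of m, folded n(1)] chain sums[of Opened] num_codes_Narrow[OF n(2)]
        unfolding Narrow by linarith
    next
      case Opened
      show ?thesis using split(2)[of m, folded n(1)] chain sums[of Wide] num_codes_Opened[OF n(2)]
        unfolding Opened by linarith
    next
      case Wide
      have "rho ^ m * (2 * (coeff Wide * rho_sum)) / 1000 = 2 * (rho ^ m * (coeff Wide * rho_sum) / 1000)"
        by simp
      then show ?thesis using split(3)[of m, folded n(1)] chain sums[of Wide] num_codes_Wide[OF n(2)]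
        unfolding Wide by linarith
    qed
  qed
qed

section \<open>Counting modular lattices\<close>

lemma finite_code_nodes: "valid_code c \<Longrightarrow> finite (code_nodes c)"
  unfolding code_nodes_def by (rule strip.finite_nodes[OF strip_code])

lemma valuated_lattice_code_nodes:
  "valid_code c \<Longrightarrow> valuated_lattice (code_nodes c) node_le node_join node_meet node_height"
  unfolding code_nodes_def by (rule strip.valuated_lattice_nodes[OF strip_code])

lemma ranked_on_code_nodes: "valid_code c \<Longrightarrow> ranked_on (code_nodes c) node_le node_height"
  unfolding code_nodes_def by (rule strip.ranked_on_nodes[OF strip_code])

definition node_index :: "entry list \<Rightarrow> node \<Rightarrow> nat" where
  "node_index c = (SOME g. bij_betw g (code_nodes c) {0..<card (code_nodes c)})"

definition code_order :: "entry list \<Rightarrow> nat rel" where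
  "code_order c = rel_of {0..<card (code_nodes c)}
     (\<lambda>i j. node_le (inv_into (code_nodes c) (node_index c) i) (inv_into (code_nodes c) (node_index c) j))"

lemma bij_node_index: "valid_code c \<Longrightarrow> bij_betw (node_index c) (code_nodes c) {0..<card (code_nodes c)}"
  unfolding node_index_def using ex_bij_betw_finite_nat[OF finite_code_nodes] by (rule someI_ex)

lemma modular_code_order: "valid_code c \<Longrightarrow> modular_lattice_on {0..<card (code_nodes c)} (code_order c)"
  unfolding code_order_def
  by (rule valuated_lattice.modular_lattice_on,
      rule valuated_lattice_transfer[OF valuated_lattice_code_nodes bij_node_index])

lemma code_order_iff:
  assumes c: "valid_code c" and u: "u \<in> code_nodes c" and w: "w \<in> code_nodes c"
  shows "(node_index c u, node_index c w) \<in> code_order c \<longleftrightarrow> node_le u w"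
  using bij_betwE[OF bij_node_index[OF c]] bij_betw_inv_into_left[OF bij_node_index[OF c]] u w
  unfolding code_order_def rel_of_def by simp

lemma code_eq_of_order_iso:
  assumes c1: "valid_code c1" and c2: "valid_code c2" and w: "weight c1 = weight c2"
    and n: "card (code_nodes c1) = n" "card (code_nodes c2) = n"
    and iso: "order_iso_on {0..<n} (code_order c2) (code_order c1)"
  shows "c1 = c2"
proof -
  obtain f where f: "bij_betw f {0..<n} {0..<n}"
    and f_iso: "\<And>i j. i \<in> {0..<n} \<Longrightarrow> j \<in> {0..<n} \<Longrightarrow>
      (i, j) \<in> code_order c2 \<longleftrightarrow> (f i, f j) \<in> code_order c1"
    using iso unfolding order_iso_on_def by blast
  have b1: "bij_betw (node_index c1) (code_nodes c1) {0..<n}"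
    and b2: "bij_betw (node_index c2) (code_nodes c2) {0..<n}"
    using bij_node_index[OF c1] bij_node_index[OF c2] n by simp_all
  define \<phi> where "\<phi> = inv_into (code_nodes c1) (node_index c1) \<circ> f \<circ> node_index c2"
  have \<phi>: "bij_betw \<phi> (code_nodes c2) (code_nodes c1)"
    unfolding \<phi>_def by (rule bij_betw_trans[OF b2 bij_betw_trans[OF f bij_betw_inv_into[OF b1]]])
  have index_\<phi>: "node_index c1 (\<phi> u) = f (node_index c2 u)" if "u \<in> code_nodes c2" for u
    unfolding \<phi>_def using bij_betw_inv_into_right[OF b1] bij_betwE[OF f] bij_betwE[OF b2] that
    by simp
  have "node_le (\<phi> u) (\<phi> v) \<longleftrightarrow> node_le u v" if "u \<in> code_nodes c2" "v \<in> code_nodes c2" for u v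
  proof -
    have "\<phi> u \<in> code_nodes c1" "\<phi> v \<in> code_nodes c1" using bij_betwE[OF \<phi>] that by blast+
    then have "node_le (\<phi> u) (\<phi> v) \<longleftrightarrow> (node_index c1 (\<phi> u), node_index c1 (\<phi> v)) \<in> code_order c1"
      using code_order_iff[OF c1] by simp
    also have "\<dots> \<longleftrightarrow> (f (node_index c2 u), f (node_index c2 v)) \<in> code_order c1"
      using index_\<phi> that by simp
    also have "\<dots> \<longleftrightarrow> (node_index c2 u, node_index c2 v) \<in> code_order c2"
      using f_iso bij_betwE[OF b2] that by blast
    also have "\<dots> \<longleftrightarrow> node_le u v" using code_order_iff[OF c2 that] .
    finally show ?thesis .
  qed
  note inv = order_iso_invariants[OF ranked_on_code_nodes[OF c2] ranked_on_code_nodes[OF c1] \<phi> this]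
  show ?thesis
    by (rule code_eq_of_invariants[OF c1 c2 w]) (simp_all add: inv)
qed

lemma card_codes_le_num_modular_lattices:
  assumes "1 \<le> n"
  shows "card (codes Narrow (n - 1)) \<le> num_modular_lattices n"
proof -
  define M where "M = {r. modular_lattice_on {0..<n} r}"
  define Q where "Q = {(r, s). modular_lattice_on {0..<n} r \<and> modular_lattice_on {0..<n} s
    \<and> order_iso_on {0..<n} r s}"
  have "M \<subseteq> Pow ({0..<n} \<times> {0..<n})"
    unfolding M_def modular_lattice_on_def lattice_on_def by auto
  then have "finite M" by (rule finite_subset) simp
  then have fin: "finite (M // Q)" by (rule finite_quotient) (auto simp: M_def Q_def)
  have code: "valid_code c" "card (code_nodes c) = n" "weight c = n - 1"
    if "c \<in> codes Narrow (n - 1)" for c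
    using that card_code_nodes assms unfolding codes_def valid_code_def by auto
  have in_M: "code_order c \<in> M" if "c \<in> codes Narrow (n - 1)" for c
    using modular_code_order[OF code(1)[OF that]] code(2)[OF that] unfolding M_def by simp
  have "inj_on (\<lambda>c. Q `` {code_order c}) (codes Narrow (n - 1))"
  proof
    fix c1 c2 assume c: "c1 \<in> codes Narrow (n - 1)" "c2 \<in> codes Narrow (n - 1)"
      and eq: "Q `` {code_order c1} = Q `` {code_order c2}"
    have "order_iso_on {0..<n} (code_order c1) (code_order c1)"
      unfolding order_iso_on_def by (rule exI[of _ id]) simp
    then have "code_order c1 \<in> Q `` {code_order c1}" using in_M[OF c(1)] unfolding Q_def M_def by simp
    then have "(code_order c2, code_order c1) \<in> Q" using eq by simp
    then have "order_iso_on {0..<n} (code_order c2) (code_order c1)" unfolding Q_def by simp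
    then show "c1 = c2" using code_eq_of_order_iso code[OF c(1)] code[OF c(2)] by metis
  qed
  moreover have "(\<lambda>c. Q `` {code_order c}) ` codes Narrow (n - 1) \<subseteq> M // Q"
    using in_M by (auto intro: quotientI)
  ultimately have "card (codes Narrow (n - 1)) \<le> card (M // Q)" using fin by (rule card_inj_on_le)
  then show ?thesis unfolding num_modular_lattices_def M_def Q_def .
qed

theorem corollary2p4:
  shows "\<exists>b::real. b > 0 \<and>
    (\<forall>\<^sub>F n in sequentially. real (num_modular_lattices n) \<ge> b * 2.1332 ^ n)"
proof (intro exI conjI)
  show "(0::real) < 1 / 1000 / 2.1332" by simp
  show "\<forall>\<^sub>F n in sequentially. 1 / 1000 / 2.1332 * 2.1332 ^ n \<le> real (num_modular_lattices n)"
    unfolding eventually_sequentially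
  proof (intro exI allI impI)
    fix n :: nat assume "2 \<le> n"
    then have "1 / 1000 / 2.1332 * 2.1332 ^ n = coeff Narrow * rho ^ (n - 1) / 1000"
      by (cases n) (simp_all add: rho_def)
    also have "\<dots> \<le> num_codes Narrow (n - 1)"
      using num_codes_lower_bound[of "n - 1" Narrow] \<open>2 \<le> n\<close> by simp
    also have "\<dots> \<le> real (num_modular_lattices n)"
      using card_codes_le_num_modular_lattices \<open>2 \<le> n\<close> by simp
    finally show "1 / 1000 / 2.1332 * 2.1332 ^ n \<le> real (num_modular_lattices n)" .
  qed
qed

end
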